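(* If $X$ is a compact Alexandroff space, then the number of distinct basic sets in $X$ is at most $\min(X)$.
   Context: A topological space $X$ is an Alexandroff space if arbitrary intersections of open sets are open. In an Alexandroff space, $S(x)$ denotes the minimal open neighborhood of $x$, i.e. the intersection of all open sets containing $x$, which is open. $S(x)$ is called basic if for all $y,z\in X$: whenever $S(x)\subseteq S(y)$ and $S(z)\subseteq S(y)$ then $S(x)\subseteq S(z)$; and whenever $S(x)\not\subseteq S(y)$ then $S(x)\cap S(y)=\emptyset$. A basic set of $X$ is a set of the form $S(x)$ that is basic. For a compact Alexandroff space $X$, $\min(X)$ is the minimum cardinality $|V|$ over all finite covers $V$ of $X$ consisting of sets of the form $S(x)$, $x\in X$. *)

theory Defs
  imports "HOL-Analysis.Analysis"
begin

text \<open>Alexandroff space: arbitrary (nonempty) intersections of open sets are open.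
  The empty intersection is the whole space, which is open anyway.\<close>
definition alexandroff_space :: "'a topology \<Rightarrow> bool" where
  "alexandroff_space X \<longleftrightarrow>
     (\<forall>\<U>. \<U> \<noteq> {} \<and> (\<forall>U\<in>\<U>. openin X U) \<longrightarrow> openin X (\<Inter>\<U>))"

definition minnbhd :: "'a topology \<Rightarrow> 'a \<Rightarrow> 'a set" where
  "minnbhd X x = \<Inter>{U. openin X U \<and> x \<in> U}"

definition is_basic :: "'a topology \<Rightarrow> 'a \<Rightarrow> bool" where
  "is_basic X x \<longleftrightarrow> x \<in> topspace X \<and>
     (\<forall>y\<in>topspace X. \<forall>z\<in>topspace X.
        (minnbhd X x \<subseteq> minnbhd X y \<and> minnbhd X z \<subseteq> minnbhd X y
            \<longrightarrow> minnbhd X x \<subseteq> minnbhd X z) \<and>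
        (\<not> minnbhd X x \<subseteq> minnbhd X y \<longrightarrow> minnbhd X x \<inter> minnbhd X y = {}))"

definition basic_sets :: "'a topology \<Rightarrow> 'a set set" where
  "basic_sets X = {minnbhd X x | x. is_basic X x}"

definition min_cover :: "'a topology \<Rightarrow> nat" where
  "min_cover X = (LEAST n. \<exists>V. finite V \<and> V \<subseteq> minnbhd X ` topspace X
                              \<and> \<Union>V = topspace X \<and> card V = n)"

end

theory Submission
  imports Defs
begin

text \<open>If S(a) and S(b) are basic and both lie in some S(y), then basicness of a (with z = b) gives
  S(a) \<subseteq> S(b) and symmetrically S(b) \<subseteq> S(a); so below each S(y) there is at most one basic set.
  In an Alexandroff space S(y) is open, so for every cover of X by minimal neighbourhoods each
  basic set lies below some member of the cover, and distinct basic sets below distinct members.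
  Compactness makes finite such covers exist, in particular one of size min(X).\<close>

lemma minnbhd_open:
  assumes "alexandroff_space X" "x \<in> topspace X"
  shows "openin X (minnbhd X x)"
proof -
  have "{U. openin X U \<and> x \<in> U} \<noteq> {}"
    using assms(2) by auto
  then show ?thesis
    using assms(1) unfolding alexandroff_space_def minnbhd_def by auto
qed

lemma in_minnbhd: "x \<in> topspace X \<Longrightarrow> x \<in> minnbhd X x"
  unfolding minnbhd_def by auto

lemma minnbhd_subset_topspace: "x \<in> topspace X \<Longrightarrow> minnbhd X x \<subseteq> topspace X"
  unfolding minnbhd_def by auto

lemma minnbhd_subset_minnbhd:
  assumes "alexandroff_space X" "y \<in> topspace X" "x \<in> minnbhd X y"
  shows "minnbhd X x \<subseteq> minnbhd X y"
  using minnbhd_open[OF assms(1,2)] assms(3) unfolding minnbhd_def[of X x] by auto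

lemma is_basic_in_topspace: "is_basic X x \<Longrightarrow> x \<in> topspace X"
  unfolding is_basic_def by simp

lemma is_basic_subset_minnbhd:
  assumes "is_basic X a" "y \<in> topspace X" "z \<in> topspace X"
    and "minnbhd X a \<subseteq> minnbhd X y" "minnbhd X z \<subseteq> minnbhd X y"
  shows "minnbhd X a \<subseteq> minnbhd X z"
  using assms unfolding is_basic_def by blast

lemma basic_minnbhds_below_common_eq:
  assumes "is_basic X a" "is_basic X b" "y \<in> topspace X"
    and "minnbhd X a \<subseteq> minnbhd X y" "minnbhd X b \<subseteq> minnbhd X y"
  shows "minnbhd X a = minnbhd X b"
  using is_basic_subset_minnbhd[OF assms(1,3) is_basic_in_topspace[OF assms(2)] assms(4,5)]
    is_basic_subset_minnbhd[OF assms(2,3) is_basic_in_topspace[OF assms(1)] assms(5,4)]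
  by (rule subset_antisym)

lemma minnbhd_below_cover_member:
  assumes "alexandroff_space X" "V \<subseteq> minnbhd X ` topspace X" "\<Union>V = topspace X"
    and "x \<in> topspace X"
  shows "\<exists>U\<in>V. minnbhd X x \<subseteq> U"
proof -
  obtain U where "U \<in> V" "x \<in> U"
    using assms(3,4) by blast
  moreover obtain y where "y \<in> topspace X" "U = minnbhd X y"
    using \<open>U \<in> V\<close> assms(2) by blast
  ultimately show ?thesis
    using minnbhd_subset_minnbhd[OF assms(1)] by blast
qed

lemma basic_sets_le_minnbhd_cover:
  assumes "alexandroff_space X" "finite V" "V \<subseteq> minnbhd X ` topspace X" "\<Union>V = topspace X"
  shows "finite (basic_sets X) \<and> card (basic_sets X) \<le> card V"
proof -
  define above where "above B = (SOME U. U \<in> V \<and> B \<subseteq> U)" for B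
  have above: "above B \<in> V \<and> B \<subseteq> above B" if B: "B \<in> basic_sets X" for B
  proof -
    obtain a where a: "is_basic X a" "B = minnbhd X a"
      using B unfolding basic_sets_def by blast
    then have "\<exists>U. U \<in> V \<and> B \<subseteq> U"
      using minnbhd_below_cover_member[OF assms(1,3,4) is_basic_in_topspace[OF a(1)]] by blast
    then show ?thesis
      unfolding above_def by (rule someI_ex)
  qed
  have inj: "inj_on above (basic_sets X)"
  proof (rule inj_onI)
    fix B C assume B: "B \<in> basic_sets X" and C: "C \<in> basic_sets X" and "above B = above C"
    obtain a b where a: "is_basic X a" "B = minnbhd X a" and b: "is_basic X b" "C = minnbhd X b"
      using B C unfolding basic_sets_def by blast
    obtain y where y: "y \<in> topspace X" "above B = minnbhd X y"
      using above[OF B] assms(3) by blast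
    have "minnbhd X a \<subseteq> minnbhd X y" "minnbhd X b \<subseteq> minnbhd X y"
      using above[OF B] above[OF C] \<open>above B = above C\<close> a b y by auto
    then show "B = C"
      using basic_minnbhds_below_common_eq[OF a(1) b(1) y(1)] a b by simp
  qed
  have image: "above ` basic_sets X \<subseteq> V"
    using above by blast
  show ?thesis
    using finite_imageD[OF finite_subset[OF image assms(2)] inj] card_inj_on_le[OF inj image assms(2)]
    by blast
qed

lemma Union_minnbhds_eq_topspace: "\<Union>(minnbhd X ` topspace X) = topspace X"
proof
  show "\<Union>(minnbhd X ` topspace X) \<subseteq> topspace X"
    using minnbhd_subset_topspace by (rule UN_least)
  show "topspace X \<subseteq> \<Union>(minnbhd X ` topspace X)"
    using in_minnbhd by (intro subsetI UN_I)
qed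

lemma compact_alexandroff_finite_minnbhd_cover:
  assumes "alexandroff_space X" "compact_space X"
  obtains V where "finite V" "V \<subseteq> minnbhd X ` topspace X" "\<Union>V = topspace X"
proof -
  have "\<forall>U \<in> minnbhd X ` topspace X. openin X U"
    using minnbhd_open[OF assms(1)] by blast
  with assms(2) show ?thesis
    using that Union_minnbhds_eq_topspace unfolding compact_space by meson
qed

theorem theorem17:
  fixes X :: "'a topology"
  assumes "alexandroff_space X" and "compact_space X"
  shows "finite (basic_sets X) \<and> card (basic_sets X) \<le> min_cover X"
proof -
  let ?cover_of_size = "\<lambda>n. \<exists>V. finite V \<and> V \<subseteq> minnbhd X ` topspace X
                                 \<and> \<Union>V = topspace X \<and> card V = n"
  obtain V where "finite V" "V \<subseteq> minnbhd X ` topspace X" "\<Union>V = topspace X"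
    using compact_alexandroff_finite_minnbhd_cover[OF assms] by metis
  then have "?cover_of_size (card V)"
    by blast
  then have "?cover_of_size (min_cover X)"
    unfolding min_cover_def by (rule LeastI)
  then show ?thesis
    using basic_sets_le_minnbhd_cover[OF assms(1)] by metis
qed

end
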